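(* Let $n\ge 1$, identify $\mathbb{R}^{n+1}=\mathbb{R}^n\times\mathbb{R}$, let $f\colon\mathbb{R}^n\to\mathbb{R}$ be continuous with epigraph $L=\{(x,y)\mid f(x)\le y\}$, and let $K\subset\mathbb{R}^{n+1}$ be a nonempty closed set with $K\cap L=\emptyset$. Suppose there is a point $(x_*,y_* )\in K$ such that $y_*<f(x)$ for all $x\in\mathbb{R}^n$. Then for every $x\in\mathbb{R}^n$ there exists $y\in\mathbb{R}$ with $d((x,y),K)=d((x,y),L)$, and every such equidistant point $(x,y)$ satisfies $$\min\left\{\frac{|x-x_*|^2+y_*^2-u^2}{2(y_*-u)},\,y_*\right\}\le y<f(x),\qquad\text{where } u=\min\{f(s)\mid s\in\mathbb{R}^n,\ |x-s|\le|x-x_*|\}.$$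
   Context: For $A\subset\mathbb{R}^{m}$ and $p\in\mathbb{R}^m$, $d(p,A)=\inf\{|p-q|\mid q\in A\}$ with the Euclidean norm. A point $p$ is called equidistant (for $K$ and $L$) if $d(p,K)=d(p,L)$. *)

theory Defs
  imports "HOL-Analysis.Analysis"
begin

end

theory Submission
  imports Defs
begin

text \<open>
  On the vertical line through \<open>x\<close>, the distance to the epigraph \<open>L\<close> minus the distance
  to \<open>K\<close> is continuous; it is negative for \<open>y \<ge> f x\<close>, where the distance to \<open>L\<close> vanishes
  but that to the closed set \<open>K\<close> does not, and positive for \<open>y\<close> below both \<open>y\<^sub>*\<close> and the
  stated bound. For such \<open>y\<close> the point \<open>(x, y)\<close> is strictly closer to \<open>(x\<^sub>*, y\<^sub>*)\<close> than to
  any \<open>(s, t) \<in> L\<close>: if \<open>|x - s| \<le> |x - x\<^sub>*|\<close> then \<open>t \<ge> u\<close>, and the bound on \<open>y\<close> is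
  exactly \<open>|x - x\<^sub>*|\<^sup>2 + (y - y\<^sub>*)\<^sup>2 < (u - y)\<^sup>2\<close>; otherwise \<open>t \<ge> y\<^sub>*\<close> and the
  horizontal offset alone is larger. As the distance to \<open>L\<close> is attained, the strict
  inequality survives the infimum. The intermediate value theorem gives an equidistant
  point, and the two strict inequalities confine all of them.
\<close>

lemma closed_epigraph_of_continuous:
  fixes f :: "'a::topological_space \<Rightarrow> real"
  assumes "continuous_on UNIV f"
  shows "closed {(s, t). f s \<le> t}"
proof -
  have "closed {p. (f \<circ> fst) p \<le> snd p}"
    by (intro closed_Collect_le continuous_on_compose continuous_intros
        continuous_on_subset[OF assms]) auto
  then show ?thesis
    by (simp add: case_prod_beta')
qed

lemma infdist_lt_infdist_of_mem_disjoint: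
  assumes "p \<in> L" and "closed K" and "K \<noteq> {}" and "K \<inter> L = {}"
  shows "infdist p L < infdist p K"
  using assms infdist_pos_not_in_closed[of K p] by auto

lemma continuous_on_compact_Inf_image:
  fixes f :: "'a::topological_space \<Rightarrow> real"
  assumes "continuous_on S f" and "compact S" and "S \<noteq> {}"
  obtains s0 where "s0 \<in> S" and "Inf (f ` S) = f s0" and "\<forall>s\<in>S. f s0 \<le> f s"
proof -
  obtain s0 where s0: "s0 \<in> S" "\<forall>s\<in>S. f s0 \<le> f s"
    using continuous_attains_inf[OF assms(2,3,1)] by blast
  then have "Inf (f ` S) = f s0"
    by (intro cInf_eq_minimum) auto
  with s0 that show ?thesis
    by blast
qed

lemma infdist_eq_between:
  fixes x :: "'a::metric_space" and a b :: real
  assumes "a \<le> b"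
    and "infdist (x, a) A \<le> infdist (x, a) B"
    and "infdist (x, b) B \<le> infdist (x, b) A"
  shows "\<exists>y\<in>{a..b}. infdist (x, y) A = infdist (x, y) B"
proof -
  let ?g = "\<lambda>y. infdist (x, y) A - infdist (x, y) B"
  have "continuous_on {a..b} ?g"
    by (intro continuous_intros continuous_on_infdist)
  then obtain y where "a \<le> y" "y \<le> b" "?g y = 0"
    using IVT'[of ?g a 0 b] assms by auto
  then show ?thesis
    by auto
qed

lemma dist_lt_dist_epigraph_point:
  fixes f :: "'a::metric_space \<Rightarrow> real"
  assumes ys_le: "\<forall>s. ys \<le> f s"
    and u_le: "\<forall>s\<in>cball x (dist x xs). u \<le> f s"
    and "ys < u" and "y < ys"
    and y_bound: "y < (dist x xs ^ 2 + ys ^ 2 - u ^ 2) / (2 * (ys - u))"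
    and "f s \<le> t"
  shows "dist (x, y) (xs, ys) < dist (x, y) (s, t)"
proof -
  define r where "r = dist x xs"
  have "r ^ 2 + ys ^ 2 - u ^ 2 < y * (2 * (ys - u))"
    using y_bound \<open>ys < u\<close> by (simp add: r_def less_divide_eq)
  then have closer_than_u: "r ^ 2 + (y - ys) ^ 2 < (u - y) ^ 2"
    by (simp add: power2_eq_square algebra_simps)
  have "r ^ 2 + (y - ys) ^ 2 < dist x s ^ 2 + (y - t) ^ 2"
  proof (cases "dist x s \<le> r")
    case True
    then have "u \<le> t"
      using u_le \<open>f s \<le> t\<close> by (force simp: r_def)
    then have "(u - y) ^ 2 \<le> (y - t) ^ 2"
      using \<open>ys < u\<close> \<open>y < ys\<close> by (simp add: power2_commute[of y] power_mono)
    with closer_than_u show ?thesis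
      using zero_le_power2[of "dist x s"] by linarith
  next
    case False
    have "ys \<le> t"
      using ys_le \<open>f s \<le> t\<close> order_trans by blast
    then have "(y - ys) ^ 2 \<le> (y - t) ^ 2"
      using \<open>y < ys\<close> by (simp add: power2_commute[of y] power_mono)
    moreover have "r ^ 2 < dist x s ^ 2"
      using False by (simp add: r_def power_strict_mono)
    ultimately show ?thesis
      by linarith
  qed
  then show ?thesis
    unfolding dist_Pair_Pair r_def dist_real_def power2_abs by (rule real_sqrt_less_mono)
qed

lemma infdist_lt_infdist_epigraph_below:
  fixes f :: "'a::heine_borel \<Rightarrow> real"
  assumes "continuous_on UNIV f" and "(xs, ys) \<in> K" and "\<forall>s. ys \<le> f s"
    and "\<forall>s\<in>cball x (dist x xs). u \<le> f s" and "ys < u" and "y < ys"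
    and "y < (dist x xs ^ 2 + ys ^ 2 - u ^ 2) / (2 * (ys - u))"
  shows "infdist (x, y) K < infdist (x, y) {(s, t). f s \<le> t}"
proof -
  have "{(s, t). f s \<le> t} \<noteq> {}"
    by auto
  then obtain p where "p \<in> {(s, t). f s \<le> t}" and "infdist (x, y) {(s, t). f s \<le> t} = dist (x, y) p"
    using infdist_attains_inf[OF closed_epigraph_of_continuous[OF assms(1)]] by blast
  then obtain s t where "f s \<le> t" and attained: "infdist (x, y) {(s, t). f s \<le> t} = dist (x, y) (s, t)"
    by auto
  have "infdist (x, y) K \<le> dist (x, y) (xs, ys)"
    by (rule infdist_le[OF assms(2)])
  also have "\<dots> < dist (x, y) (s, t)"
    using dist_lt_dist_epigraph_point[OF assms(3-7) \<open>f s \<le> t\<close>] .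
  finally show ?thesis
    unfolding attained .
qed

theorem lemma1:
  fixes f :: "real^'n \<Rightarrow> real" and K :: "((real^'n) \<times> real) set"
    and xs :: "real^'n" and ys :: real
  assumes "continuous_on UNIV f"
    and "closed K" and "K \<noteq> {}"
    and "K \<inter> {(x, y). f x \<le> y} = {}"
    and "(xs, ys) \<in> K"
    and "\<forall>x. ys < f x"
  shows "\<forall>x. (\<exists>y. infdist (x, y) K = infdist (x, y) {(s, t). f s \<le> t})
           \<and> (\<forall>y. infdist (x, y) K = infdist (x, y) {(s, t). f s \<le> t} \<longrightarrow>
               (let u = Inf (f ` cball x (norm (x - xs)))
                in min ((norm (x - xs)^2 + ys^2 - u^2) / (2 * (ys - u))) ys \<le> y \<and> y < f x))"
proof (intro allI conjI impI)
  fix x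
  define L where "L = {(s :: real^'n, t :: real). f s \<le> t}"
  define u where "u = Inf (f ` cball x (norm (x - xs)))"
  define A where "A = (norm (x - xs)^2 + ys^2 - u^2) / (2 * (ys - u))"
  have "cball x (norm (x - xs)) \<noteq> {}"
    by simp
  then obtain s0 where "u = f s0" and u_le: "\<forall>s\<in>cball x (norm (x - xs)). u \<le> f s"
    using continuous_on_compact_Inf_image[OF continuous_on_subset[OF assms(1) subset_UNIV] compact_cball]
    unfolding u_def by metis
  have above: "infdist (x, y) L < infdist (x, y) K" if "f x \<le> y" for y
    using infdist_lt_infdist_of_mem_disjoint[of "(x, y)" L K] that assms(2-4) by (auto simp: L_def)
  have below: "infdist (x, y) K < infdist (x, y) L" if "y < min A ys" for y
    using infdist_lt_infdist_epigraph_below[OF assms(1,5) _ u_le[folded dist_norm], of y]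
      that assms(6) \<open>u = f s0\<close>
    by (auto simp: L_def A_def dist_norm less_imp_le)
  have "min A ys - 1 \<le> f x"
    using assms(6)[rule_format, of x] by (simp add: min_def)
  moreover have "infdist (x, min A ys - 1) K \<le> infdist (x, min A ys - 1) L"
    using below[of "min A ys - 1"] by (simp add: min_def)
  moreover have "infdist (x, f x) L \<le> infdist (x, f x) K"
    using above[of "f x"] by simp
  ultimately obtain y where "infdist (x, y) K = infdist (x, y) L"
    using infdist_eq_between by blast
  then show "\<exists>y. infdist (x, y) K = infdist (x, y) {(s, t). f s \<le> t}"
    unfolding L_def by blast
  fix y
  assume "infdist (x, y) K = infdist (x, y) {(s, t). f s \<le> t}"
  then have "\<not> y < min A ys" and "\<not> f x \<le> y"
    using above[of y] below[of y] unfolding L_def by auto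
  then show "let u = Inf (f ` cball x (norm (x - xs)))
      in min ((norm (x - xs)^2 + ys^2 - u^2) / (2 * (ys - u))) ys \<le> y \<and> y < f x"
    unfolding Let_def u_def[symmetric] A_def[symmetric] by linarith
qed

end
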